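(* Let $n\ge2$, let $\mathbb S^n\subset\mathbb R^{n+1}$ be the unit sphere and fix $p\in\mathbb S^n$. Let $a\in C^0([0,\infty))\cap C^\infty((0,\infty))$ satisfy $a(0)=0$, $a(t)=\dfrac{\sin(\log(\log(e/t)))}{1+\log(\log(e/t))}$ for $t\in(0,1]$, and $a(t)=0$ for $t\ge3/2$. Define $\phi:\mathbb S^n\to\mathbb R^{n+1}$ by $\phi(x)=\big(1+\tfrac12 a(|x-p|)\big)x$ and $Y=\phi(\mathbb S^n)$ (note $p\in Y$). If $k\geq 1$ and $f:\mathbb S^k\to Y$ is Lipschitz continuous (with respect to the Euclidean metric on $Y\subset\mathbb R^{n+1}$), then either $f(\mathbb S^k)=\{p\}$ or $p\notin f(\mathbb S^k)$. *)

theory Defs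
  imports "HOL-Analysis.Analysis"
begin

definition smooth_on :: "real set \<Rightarrow> (real \<Rightarrow> real) \<Rightarrow> bool" where
  "smooth_on S f \<longleftrightarrow> (\<exists>D :: nat \<Rightarrow> real \<Rightarrow> real.
      (\<forall>x\<in>S. D 0 x = f x) \<and>
      (\<forall>m. \<forall>x\<in>S. (D m has_real_derivative D (Suc m) x) (at x)))"

end

theory Submission
  imports Defs
begin

text \<open>Suppose \<open>f\<close> attains \<open>p\<close> but is not constant. Composing \<open>f\<close> with an arc of the sphere gives a
  Lipschitz path \<open>h\<close> in \<open>Y\<close> that starts off \<open>p\<close> and ends at \<open>p\<close>. Just before its first arrival at
  \<open>p\<close> the path stays close to \<open>p\<close>, where \<open>Y\<close> is the radial graph \<open>|y| = 1 + a(|y/|y| - p|)/2\<close>;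
  so for the angular distance \<open>T u = |h u/|h u| - p|\<close>, which moves continuously from a positive
  value to \<open>0\<close>, the function \<open>a \<circ> T\<close> is Lipschitz. By the intermediate value theorem \<open>T\<close> passes in
  order through the points \<open>t\<^sub>j = exp (1 - exp (\<pi>/2 + j\<pi>))\<close>, where \<open>a\<close> takes the alternating
  values \<open>\<plusminus>1/(1 + \<pi>/2 + j\<pi>)\<close>. The variation of \<open>a \<circ> T\<close> on a bounded interval would thus
  dominate the harmonic series.\<close>

lemma lipschitz_comp_jumps_bounded:
  fixes g T :: "real \<Rightarrow> real" and t :: "nat \<Rightarrow> real"
  assumes t: "decseq t" "\<And>j. 0 \<le> t j"
    and T: "\<alpha> \<le> \<beta>" "continuous_on {\<alpha>..\<beta>} T" "T \<beta> = 0" "t 0 \<le> T \<alpha>"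
    and lip: "L-lipschitz_on {\<alpha>..\<beta>} (g \<circ> T)"
  shows "(\<Sum>j<n. \<bar>g (t j) - g (t (Suc j))\<bar>) \<le> L * (\<beta> - \<alpha>)"
proof -
  have L: "0 \<le> L"
    using lip by (rule lipschitz_on_nonneg)
  \<comment> \<open>The intermediate value theorem yields \<open>\<alpha> \<le> u\<^sub>0 \<le> u\<^sub>1 \<le> \<dots>\<close> with \<open>T u\<^sub>j = t j\<close>;
    the \<open>j\<close>-th jump is then at most \<open>L (u\<^sub>j\<^sub>+\<^sub>1 - u\<^sub>j)\<close>.\<close>
  have "\<exists>u. \<alpha> \<le> u \<and> u \<le> \<beta> \<and> T u = t n \<and> (\<Sum>j<n. \<bar>g (t j) - g (t (Suc j))\<bar>) \<le> L * (u - \<alpha>)" for n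
  proof (induction n)
    case 0
    show ?case
      using IVT2'[of T \<beta> "t 0" \<alpha>] T t(2) L by force
  next
    case (Suc n)
    then obtain u where u: "\<alpha> \<le> u" "u \<le> \<beta>" "T u = t n"
      and sum: "(\<Sum>j<n. \<bar>g (t j) - g (t (Suc j))\<bar>) \<le> L * (u - \<alpha>)"
      by blast
    have "continuous_on {u..\<beta>} T"
      using T(2) by (rule continuous_on_subset) (use u in auto)
    then obtain v where v: "u \<le> v" "v \<le> \<beta>" "T v = t (Suc n)"
      using IVT2'[of T \<beta> "t (Suc n)" u] T(3) t u by (force simp: decseq_Suc_iff)
    have "\<bar>g (t n) - g (t (Suc n))\<bar> \<le> L * (v - u)"
      using lipschitz_onD[OF lip, of u v] u v by (simp add: dist_real_def)
    with sum have "(\<Sum>j<Suc n. \<bar>g (t j) - g (t (Suc j))\<bar>) \<le> L * (v - \<alpha>)"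
      by (simp add: algebra_simps)
    then show ?case
      using u v by (intro exI[of _ v]) auto
  qed
  then obtain u where "u \<le> \<beta>" "(\<Sum>j<n. \<bar>g (t j) - g (t (Suc j))\<bar>) \<le> L * (u - \<alpha>)"
    by blast
  moreover have "L * (u - \<alpha>) \<le> L * (\<beta> - \<alpha>)"
    using \<open>u \<le> \<beta>\<close> L by (intro mult_left_mono) auto
  ultimately show ?thesis
    by linarith
qed

lemma summable_jumps_if_lipschitz_comp:
  fixes g T :: "real \<Rightarrow> real" and t :: "nat \<Rightarrow> real"
  assumes t: "decseq t" "\<And>j. 0 \<le> t j" "t \<longlonglongrightarrow> 0"
    and T: "\<alpha> \<le> \<beta>" "continuous_on {\<alpha>..\<beta>} T" "T \<beta> = 0" "0 < T \<alpha>"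
    and lip: "L-lipschitz_on {\<alpha>..\<beta>} (g \<circ> T)"
  shows "summable (\<lambda>j. \<bar>g (t j) - g (t (Suc j))\<bar>)"
proof -
  obtain K where K: "t K \<le> T \<alpha>"
    using order_tendstoD(2)[OF t(3) T(4)] by (meson eventually_sequentially less_imp_le order_refl)
  have "decseq (\<lambda>j. t (j + K))"
    using t(1) by (simp add: decseq_def)
  then have "(\<Sum>j<n. \<bar>g (t (j + K)) - g (t (Suc j + K))\<bar>) \<le> L * (\<beta> - \<alpha>)" for n
    using lipschitz_comp_jumps_bounded[of "\<lambda>j. t (j + K)", OF _ t(2) T(1-3) _ lip] K by simp
  then have "summable (\<lambda>j. \<bar>g (t (j + K)) - g (t (Suc (j + K)))\<bar>)"
    by (intro summableI_nonneg_bounded) auto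
  then show ?thesis
    by (rule summable_iff_shift[THEN iffD1])
qed

lemma interval_before_first_hit:
  fixes h :: "real \<Rightarrow> 'a::t1_space"
  assumes h: "continuous_on {a..b} h" "h a \<noteq> p" "h b = p" "a \<le> b" and d: "0 < d"
  obtains \<alpha> \<beta> where "a \<le> \<alpha>" "\<alpha> < \<beta>" "\<beta> \<le> b" "\<beta> - \<alpha> \<le> d" "h \<alpha> \<noteq> p" "h \<beta> = p"
proof -
  define Z where "Z = {u \<in> {a..b}. h u = p}"
  define \<beta> where "\<beta> = Inf Z"
  have "closed Z"
    unfolding Z_def using h(1) by (rule continuous_closed_preimage_constant) simp
  moreover have "b \<in> Z" "bdd_below Z"
    using h by (auto simp: Z_def bdd_below_def)
  ultimately have "\<beta> \<in> Z"
    unfolding \<beta>_def by (intro closed_contains_Inf) auto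
  then have \<beta>: "a < \<beta>" "\<beta> \<le> b" "h \<beta> = p"
    using h(2) by (auto simp: Z_def order.order_iff_strict)
  have before: "h u \<noteq> p" if "a \<le> u" "u < \<beta>" for u
    using that cInf_lower[OF _ \<open>bdd_below Z\<close>, of u] \<beta> by (auto simp: Z_def \<beta>_def)
  show ?thesis
    by (rule that[of "max a (\<beta> - d)" \<beta>]) (use \<beta> d before in auto)
qed

lemma norm_sgn_minus_le:
  fixes y p :: "'a::real_normed_vector"
  assumes p: "norm p = 1"
  shows "norm (sgn y - p) \<le> 2 * norm (y - p)"
proof (cases "y = 0")
  case True
  then show ?thesis using p by simp
next
  case False
  have "norm (sgn y - y) = \<bar>1 - norm y\<bar>"
  proof -
    have "sgn y - y = (1 - norm y) *\<^sub>R sgn y"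
      using False by (simp add: sgn_div_norm algebra_simps)
    then show ?thesis
      using False by (simp add: norm_sgn)
  qed
  also have "\<dots> \<le> norm (y - p)"
    using norm_triangle_ineq3[of y p] p by (simp add: abs_minus_commute)
  finally show ?thesis
    using norm_triangle_ineq[of "sgn y - y" "y - p"] by simp
qed

lemma norm_sgn_diff_le:
  fixes z w :: "'a::real_normed_vector"
  assumes w: "w \<noteq> 0"
  shows "norm (sgn z - sgn w) \<le> 2 * norm (z - w) / norm w"
proof -
  have "sgn (z /\<^sub>R norm w) = sgn z"
    using w by (simp add: sgn_scaleR)
  then have "norm (sgn z - sgn w) \<le> 2 * norm (z /\<^sub>R norm w - sgn w)"
    using norm_sgn_minus_le[of "sgn w" "z /\<^sub>R norm w"] w by (simp add: norm_sgn)
  also have "z /\<^sub>R norm w - sgn w = (z - w) /\<^sub>R norm w"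
    by (simp add: sgn_div_norm algebra_simps)
  finally show ?thesis
    by (simp add: divide_inverse mult.commute)
qed

lemma lipschitz_on_sgn:
  fixes S :: "'a::real_normed_vector set"
  assumes "0 < c" "\<And>z. z \<in> S \<Longrightarrow> c \<le> norm z"
  shows "(2 / c)-lipschitz_on S sgn"
proof (rule lipschitz_onI)
  fix z w assume "z \<in> S" "w \<in> S"
  then have "c \<le> norm w" "w \<noteq> 0"
    using assms by force+
  then have "2 * norm (z - w) / norm w \<le> 2 / c * norm (z - w)"
    using assms(1) by (simp add: field_simps mult_right_mono)
  then show "dist (sgn z) (sgn w) \<le> 2 / c * dist z w"
    using norm_sgn_diff_le[OF \<open>w \<noteq> 0\<close>, of z] by (simp add: dist_norm)
qed (use assms(1) in simp)

lemma lipschitz_path_on_sphere: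
  fixes x y :: "'a::real_inner"
  assumes "x \<in> sphere 0 1" "y \<in> sphere 0 1" and not_antipodal: "y \<noteq> - x"
  obtains \<gamma> :: "real \<Rightarrow> 'a" and M where "M-lipschitz_on {0..1} \<gamma>" "\<gamma> ` {0..1} \<subseteq> sphere 0 1" "\<gamma> 0 = x" "\<gamma> 1 = y"
proof -
  have x: "norm x = 1" and y: "norm y = 1"
    using assms by auto
  define m where "m = x + y"
  define z where "z u = x + u *\<^sub>R (y - x)" for u :: real
  have m: "0 < norm m"
    using not_antipodal by (auto simp: m_def add_eq_0_iff2)
  have "inner x x = 1" "inner y y = 1"
    using x y by (simp_all flip: power2_norm_eq_inner)
  then have inner_zm: "inner (z u) m = norm m ^ 2 / 2" for u
    unfolding z_def m_def power2_norm_eq_inner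
    by (simp add: inner_add_left inner_add_right inner_diff_left inner_commute algebra_simps)
  then have "norm m ^ 2 / 2 \<le> norm (z u) * norm m" for u
    using norm_cauchy_schwarz[of "z u" m] inner_zm[of u] by linarith
  then have z_far: "norm m / 2 \<le> norm (z u)" for u
    using m by (simp add: power2_eq_square field_simps)
  have "z u - z v = (u - v) *\<^sub>R (y - x)" for u v
    by (simp add: z_def algebra_simps)
  then have "(norm (y - x))-lipschitz_on {0..1} z"
    by (intro lipschitz_onI) (simp_all add: dist_norm dist_real_def)
  moreover have "(2 / (norm m / 2))-lipschitz_on (z ` {0..1}) sgn"
    using m z_far by (intro lipschitz_on_sgn) auto
  ultimately have "(2 / (norm m / 2) * norm (y - x))-lipschitz_on {0..1} (\<lambda>u. sgn (z u))"
    by (rule lipschitz_on_compose2)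
  moreover have "z u \<noteq> 0" for u
    using z_far[of u] m by auto
  then have "(\<lambda>u. sgn (z u)) ` {0..1} \<subseteq> sphere 0 1"
    by (auto simp: norm_sgn)
  moreover have "sgn (z 0) = x" "sgn (z 1) = y"
    using x y by (simp_all add: z_def sgn_div_norm)
  ultimately show ?thesis
    by (rule that)
qed

lemma exists_sphere_point_neq_pm:
  fixes s :: "'a::euclidean_space"
  assumes "2 \<le> DIM('a)"
  obtains w where "w \<in> sphere 0 1" "w \<noteq> s" "w \<noteq> - s"
proof -
  obtain b1 b2 :: 'a where b: "b1 \<in> Basis" "b2 \<in> Basis" "b1 \<noteq> b2"
    using assms card_le_Suc0_iff_eq[of "Basis :: 'a set"] by (auto simp: not_less_eq_eq)
  then have "inner b1 b2 = 0" "inner b1 b1 = 1" "inner b2 b2 = 1"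
    by (auto simp: inner_Basis)
  then have "b2 \<noteq> s \<and> b2 \<noteq> - s" if "b1 = s \<or> b1 = - s"
    using that by auto
  then show ?thesis
    using that b by (metis norm_Basis mem_sphere_0)
qed

lemma sphere_split_not_antipodal:
  fixes P :: "'a::euclidean_space \<Rightarrow> bool"
  assumes "2 \<le> DIM('a)" and s: "s \<in> sphere 0 1" "P s" and s': "s' \<in> sphere 0 1" "\<not> P s'"
  obtains x y where "x \<in> sphere 0 1" "y \<in> sphere 0 1" "\<not> P x" "P y" "y \<noteq> - x"
proof (cases "s = - s'")
  case True
  obtain w where w: "w \<in> sphere 0 1" "w \<noteq> s" "w \<noteq> - s"
    using exists_sphere_point_neq_pm[OF assms(1)] .
  show ?thesis
  proof (cases "P w")
    case True
    then show ?thesis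
      using that[of s' w] s' w \<open>s = - s'\<close> by auto
  next
    case False
    then show ?thesis
      using that[of w s] s w by (metis minus_minus)
  qed
next
  case False
  then show ?thesis
    using that s s' by blast
qed

definition loglog_osc :: "real \<Rightarrow> real" where
  "loglog_osc t = sin (ln (ln (exp 1 / t))) / (1 + ln (ln (exp 1 / t)))"

text \<open>At \<open>t = osc_point j\<close> one has \<open>ln (ln (e / t)) = \<pi>/2 + j\<pi>\<close>, where the sine in
  \<^const>\<open>loglog_osc\<close> is \<open>\<plusminus>1\<close>.\<close>
definition osc_point :: "nat \<Rightarrow> real" where
  "osc_point j = exp (1 - exp (pi / 2 + real j * pi))"

lemma osc_point_pos: "0 < osc_point j"
  by (simp add: osc_point_def)

lemma osc_point_le_one: "osc_point j \<le> 1"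
  using pi_gt_zero by (simp add: osc_point_def add_nonneg_nonneg)

lemma decseq_osc_point: "decseq osc_point"
  using pi_gt_zero by (intro decseq_SucI) (simp add: osc_point_def)

lemma osc_point_le_inverse: "osc_point j \<le> inverse (real (Suc j))"
proof -
  define L where "L = pi / 2 + real j * pi"
  have "real j \<le> L"
    using pi_gt3 mult_left_mono[of 1 pi "real j"] by (simp add: L_def)
  also have "L \<le> exp L - 1"
    using exp_ge_add_one_self[of L] by linarith
  also have "exp L - 1 \<le> exp (exp L - 1) - 1"
    using exp_ge_add_one_self[of "exp L - 1"] by simp
  finally have "real (Suc j) \<le> exp (exp L - 1)"
    by simp
  moreover have "osc_point j = inverse (exp (exp L - 1))"
    by (simp add: osc_point_def L_def flip: exp_minus)
  ultimately show ?thesis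
    by (simp add: le_imp_inverse_le)
qed

lemma osc_point_tendsto_zero: "osc_point \<longlonglongrightarrow> 0"
  by (rule tendsto_sandwich[OF _ _ tendsto_const LIMSEQ_inverse_real_of_nat])
    (use osc_point_pos osc_point_le_inverse in \<open>auto intro: less_imp_le always_eventually\<close>)

lemma loglog_osc_osc_point: "loglog_osc (osc_point j) = (-1) ^ j / (1 + pi / 2 + real j * pi)"
proof -
  have "ln (ln (exp 1 / osc_point j)) = pi / 2 + real j * pi"
    by (simp add: osc_point_def exp_diff[symmetric])
  moreover have "sin (pi / 2 + real j * pi) = (-1) ^ j"
    by (simp add: sin_add)
  ultimately show ?thesis
    by (simp add: loglog_osc_def add.assoc)
qed

lemma loglog_osc_jump_ge:
  "1 / (4 * (real j + 1)) \<le> \<bar>loglog_osc (osc_point j) - loglog_osc (osc_point (Suc j))\<bar>"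
proof -
  define c where "c k = 1 + pi / 2 + real k * pi" for k :: nat
  have c_pos: "0 < c k" for k
    using pi_gt_zero by (simp add: c_def add_pos_nonneg)
  have "loglog_osc (osc_point j) - loglog_osc (osc_point (Suc j)) = (-1) ^ j * (1 / c j + 1 / c (Suc j))"
    by (simp add: loglog_osc_osc_point c_def field_simps)
  then have "\<bar>loglog_osc (osc_point j) - loglog_osc (osc_point (Suc j))\<bar> = 1 / c j + 1 / c (Suc j)"
    using c_pos[of j] c_pos[of "Suc j"] by (simp add: abs_mult)
  moreover have "c j \<le> 4 * (real j + 1)"
    using pi_less_4 mult_left_mono[of pi 4 "real j"] by (simp add: c_def algebra_simps)
  then have "1 / (4 * (real j + 1)) \<le> 1 / c j"
    using c_pos[of j] by (simp add: frac_le)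
  moreover have "0 < 1 / c (Suc j)"
    using c_pos[of "Suc j"] by simp
  ultimately show ?thesis
    by linarith
qed

lemma not_summable_loglog_osc_jumps:
  "\<not> summable (\<lambda>j. \<bar>loglog_osc (osc_point j) - loglog_osc (osc_point (Suc j))\<bar>)"
proof
  assume "summable (\<lambda>j. \<bar>loglog_osc (osc_point j) - loglog_osc (osc_point (Suc j))\<bar>)"
  then have "summable (\<lambda>j. 1 / (4 * (real j + 1)))"
    by (rule summable_comparison_test') (use loglog_osc_jump_ge in auto)
  then have "summable (\<lambda>j. 4 * (1 / (4 * (real j + 1))))"
    by (rule summable_mult)
  moreover have "(\<lambda>j. 4 * (1 / (4 * (real j + 1)))) = (\<lambda>j. inverse (real (Suc j)))"
    by (simp add: fun_eq_iff field_simps)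
  ultimately have "summable (\<lambda>j. inverse (real (Suc j)))"
    by simp
  then show False
    using not_summable_harmonic[where 'a = real] summable_Suc_iff by blast
qed

definition radial_bump :: "(real \<Rightarrow> real) \<Rightarrow> 'a::real_normed_vector \<Rightarrow> 'a \<Rightarrow> 'a" where
  "radial_bump a p x = (1 + a (norm (x - p)) / 2) *\<^sub>R x"

text \<open>Since \<open>a\<close> is not assumed bounded, the factor \<open>1 + a/2\<close> may be negative; the bound \<open>1/4\<close>
  excludes such points, as they would come from \<open>x\<close> near \<open>-p\<close>, where \<open>a\<close> vanishes.\<close>
lemma radial_bump_near_pole:
  fixes p y :: "'a::real_normed_vector"
  assumes a_large: "\<And>t. 3/2 \<le> t \<Longrightarrow> a t = 0" and p: "norm p = 1"
    and y: "y \<in> radial_bump a p ` sphere 0 1" and close: "norm (y - p) < 1/4"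
  shows "norm y = 1 + a (norm (sgn y - p)) / 2"
proof -
  obtain x where x: "norm x = 1" and y_eq: "y = radial_bump a p x"
    using y by auto
  define r where "r = 1 + a (norm (x - p)) / 2"
  have y_r: "y = r *\<^sub>R x"
    by (simp add: y_eq radial_bump_def r_def)
  have y0: "y \<noteq> 0"
    using close p by auto
  have sgn_close: "norm (sgn y - p) < 1/2"
    using norm_sgn_minus_le[OF p, of y] close by linarith
  have "0 < r"
  proof (rule ccontr)
    assume "\<not> 0 < r"
    then have "r < 0"
      using y0 y_r by fastforce
    then have "sgn y = - x"
      using x by (simp add: y_r sgn_scaleR sgn_div_norm)
    then have "norm (x + p) < 1/2"
      using sgn_close by (simp add: norm_minus_commute add.commute)
    moreover have "norm (2 *\<^sub>R p) \<le> norm (p - x) + norm (x + p)"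
      using norm_triangle_ineq[of "p - x" "x + p"] by (simp add: algebra_simps scaleR_2)
    ultimately have "3/2 \<le> norm (x - p)"
      using p by (simp add: norm_minus_commute)
    then have "r = 1"
      by (simp add: r_def a_large)
    with \<open>r < 0\<close> show False
      by simp
  qed
  then have "sgn y = x"
    using x by (simp add: y_r sgn_scaleR sgn_div_norm)
  then show ?thesis
    using x \<open>0 < r\<close> by (simp add: y_r r_def)
qed

lemma lipschitz_angular_profile_near_pole:
  fixes h :: "'b::metric_space \<Rightarrow> 'a::real_normed_vector"
  assumes a_large: "\<And>t. 3/2 \<le> t \<Longrightarrow> a t = 0" and p: "norm p = 1"
    and h: "K-lipschitz_on S h" "h ` S \<subseteq> radial_bump a p ` sphere 0 1"
    and near_pole: "\<And>u. u \<in> S \<Longrightarrow> norm (h u - p) < 1/4"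
  shows "(2 * K)-lipschitz_on S (\<lambda>u. a (norm (sgn (h u) - p)))"
proof (rule lipschitz_onI)
  have profile: "a (norm (sgn (h u) - p)) = 2 * norm (h u) - 2" if "u \<in> S" for u
  proof -
    have "h u \<in> radial_bump a p ` sphere 0 1"
      using h(2) that by auto
    then have "norm (h u) = 1 + a (norm (sgn (h u) - p)) / 2"
      using a_large p near_pole[OF that] by (intro radial_bump_near_pole)
    then show ?thesis
      by simp
  qed
  fix u v assume uv: "u \<in> S" "v \<in> S"
  have "dist (a (norm (sgn (h u) - p))) (a (norm (sgn (h v) - p))) = 2 * \<bar>norm (h u) - norm (h v)\<bar>"
    using profile[OF uv(1)] profile[OF uv(2)] by (simp add: dist_real_def abs_if)
  also have "\<dots> \<le> 2 * (K * dist u v)"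
    using norm_triangle_ineq3[of "h u" "h v"] lipschitz_onD[OF h(1) uv] by (simp add: dist_norm)
  finally show "dist (a (norm (sgn (h u) - p))) (a (norm (sgn (h v) - p))) \<le> 2 * K * dist u v"
    by simp
qed (use lipschitz_on_nonneg[OF h(1)] in simp)

lemma lipschitz_path_close_before_first_hit:
  fixes h :: "real \<Rightarrow> 'a::real_normed_vector"
  assumes h: "K-lipschitz_on {0..1} h" "h 0 \<noteq> p" "h 1 = p" and e: "0 < e"
  obtains \<alpha> \<beta> where "0 \<le> \<alpha>" "\<alpha> < \<beta>" "\<beta> \<le> 1" "h \<alpha> \<noteq> p" "h \<beta> = p"
    "\<And>u. u \<in> {\<alpha>..\<beta>} \<Longrightarrow> norm (h u - p) < e"
proof -
  have K: "0 \<le> K"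
    using h(1) by (rule lipschitz_on_nonneg)
  then have "0 < e / (K + 1)"
    using e by simp
  then obtain \<alpha> \<beta> where \<alpha>\<beta>: "0 \<le> \<alpha>" "\<alpha> < \<beta>" "\<beta> \<le> 1" "\<beta> - \<alpha> \<le> e / (K + 1)"
    and "h \<alpha> \<noteq> p" "h \<beta> = p"
    using interval_before_first_hit[OF lipschitz_on_continuous_on[OF h(1)] h(2,3) zero_le_one]
    by blast
  moreover have "norm (h u - p) < e" if "u \<in> {\<alpha>..\<beta>}" for u
  proof -
    have "norm (h u - p) \<le> K * (\<beta> - u)"
      using lipschitz_onD[OF h(1), of u \<beta>] that \<alpha>\<beta> \<open>h \<beta> = p\<close> by (auto simp: dist_norm dist_real_def)
    also have "\<dots> \<le> K * (e / (K + 1))"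
      using that \<alpha>\<beta> K by (intro mult_left_mono) auto
    also have "\<dots> < e"
      using K e by (simp add: field_simps)
    finally show ?thesis .
  qed
  ultimately show ?thesis
    using that by blast
qed

lemma lipschitz_path_to_pole_starts_at_pole:
  fixes a :: "real \<Rightarrow> real" and p :: "'a::real_normed_vector" and h :: "real \<Rightarrow> 'a"
  assumes a_osc: "\<And>t. 0 < t \<Longrightarrow> t \<le> 1 \<Longrightarrow> a t = loglog_osc t"
    and a_large: "\<And>t. 3/2 \<le> t \<Longrightarrow> a t = 0" and a0: "a 0 = 0" and p: "norm p = 1"
    and h: "K-lipschitz_on {0..1} h" "h ` {0..1} \<subseteq> radial_bump a p ` sphere 0 1" "h 1 = p"
  shows "h 0 = p"
proof (rule ccontr)
  assume "h 0 \<noteq> p"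
  obtain \<alpha> \<beta> where \<alpha>\<beta>: "0 \<le> \<alpha>" "\<alpha> < \<beta>" "\<beta> \<le> 1" "h \<alpha> \<noteq> p" "h \<beta> = p"
    and near_pole: "\<And>u. u \<in> {\<alpha>..\<beta>} \<Longrightarrow> norm (h u - p) < 1/4"
    using lipschitz_path_close_before_first_hit[OF h(1) \<open>h 0 \<noteq> p\<close> h(3), of "1/4"] by auto
  have sub: "{\<alpha>..\<beta>} \<subseteq> {0..1}"
    using \<alpha>\<beta> by auto
  define T where "T u = norm (sgn (h u) - p)" for u
  have "continuous_on {\<alpha>..\<beta>} T"
    unfolding T_def using near_pole p continuous_on_subset[OF lipschitz_on_continuous_on[OF h(1)] sub]
    by (intro continuous_intros) force+
  moreover have "T \<beta> = 0"
    using \<alpha>\<beta>(5) p by (simp add: T_def sgn_div_norm)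
  moreover have "0 < T \<alpha>"
  proof -
    have \<alpha>: "\<alpha> \<in> {\<alpha>..\<beta>}"
      using \<alpha>\<beta> by simp
    then have "h \<alpha> \<in> radial_bump a p ` sphere 0 1"
      using h(2) sub by auto
    then have "norm (h \<alpha>) = 1 + a (T \<alpha>) / 2"
      unfolding T_def using a_large p near_pole[OF \<alpha>] by (intro radial_bump_near_pole)
    then have "T \<alpha> \<noteq> 0"
      using a0 \<alpha>\<beta>(4) by (auto simp: T_def sgn_div_norm)
    then show ?thesis
      by (simp add: T_def)
  qed
  moreover have "(2 * K)-lipschitz_on {\<alpha>..\<beta>} (\<lambda>u. a (norm (sgn (h u) - p)))"
    using a_large p lipschitz_on_subset[OF h(1) sub] subset_trans[OF image_mono[OF sub] h(2)] near_pole
    by (rule lipschitz_angular_profile_near_pole)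
  then have "(2 * K)-lipschitz_on {\<alpha>..\<beta>} (a \<circ> T)"
    by (simp add: T_def o_def)
  ultimately have "summable (\<lambda>j. \<bar>a (osc_point j) - a (osc_point (Suc j))\<bar>)"
    using \<alpha>\<beta>(1-3,5) decseq_osc_point osc_point_pos osc_point_tendsto_zero
    by (intro summable_jumps_if_lipschitz_comp[where T = T]) (auto intro: less_imp_le)
  then show False
    using not_summable_loglog_osc_jumps osc_point_pos osc_point_le_one by (simp add: a_osc)
qed

theorem lemma3p3:
  fixes a :: "real \<Rightarrow> real"
    and p :: "'n::euclidean_space"
    and f :: "'k::euclidean_space \<Rightarrow> 'n"
  assumes dimn: "DIM('n) \<ge> 3"
    and dimk: "DIM('k) \<ge> 2"
    and p_sph: "p \<in> sphere 0 1"
    and a_cont: "continuous_on {0..} a"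
    and a_smooth: "smooth_on {0<..} a"
    and a0: "a 0 = 0"
    and a_small: "\<And>t. 0 < t \<Longrightarrow> t \<le> 1 \<Longrightarrow>
                    a t = sin (ln (ln (exp 1 / t))) / (1 + ln (ln (exp 1 / t)))"
    and a_large: "\<And>t. t \<ge> 3/2 \<Longrightarrow> a t = 0"
    and f_lip: "\<exists>C. C-lipschitz_on (sphere 0 1) f"
    and f_into: "f ` sphere 0 1 \<subseteq> (\<lambda>x. (1 + a (norm (x - p)) / 2) *\<^sub>R x) ` sphere 0 1"
  shows "f ` sphere 0 1 = {p} \<or> p \<notin> f ` sphere 0 1"
proof (rule ccontr)
  assume "\<not> ?thesis"
  then obtain s s' where "s \<in> sphere 0 1" "f s = p" "s' \<in> sphere 0 1" "f s' \<noteq> p"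
    by blast
  then obtain x y where xy: "x \<in> sphere 0 1" "y \<in> sphere 0 1" "f x \<noteq> p" "f y = p" "y \<noteq> - x"
    using sphere_split_not_antipodal[OF dimk, of s "\<lambda>s. f s = p"] by blast
  obtain \<gamma> :: "real \<Rightarrow> 'k" and M
    where \<gamma>: "M-lipschitz_on {0..1} \<gamma>" "\<gamma> ` {0..1} \<subseteq> sphere 0 1" "\<gamma> 0 = x" "\<gamma> 1 = y"
    using xy(1,2,5) by (rule lipschitz_path_on_sphere)
  obtain C where "C-lipschitz_on (sphere 0 1) f"
    using f_lip by blast
  then have "(C * M)-lipschitz_on {0..1} (\<lambda>u. f (\<gamma> u))"
    using \<gamma>(1,2) by (metis lipschitz_on_compose2 lipschitz_on_subset)
  moreover have "(\<lambda>u. f (\<gamma> u)) ` {0..1} \<subseteq> radial_bump a p ` sphere 0 1"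
    using \<gamma>(2) f_into by (fastforce simp: radial_bump_def)
  moreover have "\<And>t. 0 < t \<Longrightarrow> t \<le> 1 \<Longrightarrow> a t = loglog_osc t"
    by (simp add: a_small loglog_osc_def)
  ultimately have "f (\<gamma> 0) = p"
    using lipschitz_path_to_pole_starts_at_pole[where a = a and h = "\<lambda>u. f (\<gamma> u)"] a_large a0 p_sph \<gamma>(4) xy(4)
    by simp
  with xy \<gamma>(3) show False
    by simp
qed

end
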